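(* Let $s,t_1,\dots,t_n\in\mathbb{R}^2$ be distinct points, with $T=\{t_1,\dots,t_n\}$ ordered so that $D_{st_1}\le\dots\le D_{st_n}$. Let $P_s>0$, $N_0>0$, $\gamma\in(0,\infty)$, $P_r=\gamma P_s$, $\alpha\ge2$. Let $r^\circ$ be the point on the segment $[s,t_n]$ with $D_{sr^\circ}=\dfrac{D_{st_n}}{1+\sqrt[\alpha]{\gamma}}$, and let $C_s$ be the closed disk centered at $s$ of radius $D_{sr^\circ}$ and $C_r$ the closed disk centered at $r^\circ$ of radius $D_{r^\circ t_n}$. If $T\subseteq C_s\cup C_r$, then $r^\circ$ maximizes the multicast rate $R^*_{sT}(r)$ over all relay positions $r\in\mathbb{R}^2\setminus(\{s\}\cup T)$ (where $r^\circ$ itself is assumed not to lie in $T$).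
   Context: $D_{uv}$ is Euclidean distance. Achievable low-SNR broadcast-relay hypergraph model: for a relay position $r\notin\{s\}\cup T$, the node set is $\mathcal{N}=\{s,r\}\cup T$. The hyperarcs are $(s,J)$ for nonempty $J\subseteq\{r\}\cup T$ and $(r,J)$ for nonempty $J\subseteq T$. A power allocation assigns $P_{sJ}\ge0$, $P_{rJ}\ge0$ with $\sum_J P_{sJ}\le P_s$ and $\sum_J P_{rJ}\le P_r$; the capacity of hyperarc $(i,J)$ is $c_{iJ}=P_{iJ}/(N_0\max_{j\in J}D_{ij}^{\alpha})$. For a receiver $t\in T$, $R_{st}$ is the minimum, over all $S\subseteq\mathcal{N}$ with $s\in S$, $t\notin S$, of $\sum c_{iJ}$ over hyperarcs with $i\in S$ and $J\not\subseteq S$. The multicast rate is $R_{sT}=\min_{t\in T}R_{st}$, and $R^*_{sT}(r)$ is its maximum over all power allocations. *)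

theory Defs
  imports "HOL-Analysis.Analysis"
begin

definition hyperarcs :: "'a \<Rightarrow> 'a \<Rightarrow> 'a set \<Rightarrow> ('a \<times> 'a set) set" where
  "hyperarcs s r T =
     {(s, J) | J. J \<noteq> {} \<and> J \<subseteq> insert r T} \<union> {(r, J) | J. J \<noteq> {} \<and> J \<subseteq> T}"

definition power_allocs ::
  "'a \<Rightarrow> 'a \<Rightarrow> 'a set \<Rightarrow> real \<Rightarrow> real \<Rightarrow> (('a \<times> 'a set) \<Rightarrow> real) set" where
  "power_allocs s r T Ps Pr =
     {P. (\<forall>a\<in>hyperarcs s r T. P a \<ge> 0)
       \<and> (\<Sum>J\<in>{J. (s, J) \<in> hyperarcs s r T}. P (s, J)) \<le> Ps
       \<and> (\<Sum>J\<in>{J. (r, J) \<in> hyperarcs s r T}. P (r, J)) \<le> Pr}"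

definition capacity ::
  "real \<Rightarrow> real \<Rightarrow> (('a::metric_space \<times> 'a set) \<Rightarrow> real) \<Rightarrow> ('a \<times> 'a set) \<Rightarrow> real" where
  "capacity N0 \<alpha> P a =
     P a / (N0 * Max ((\<lambda>j. dist (fst a) j powr \<alpha>) ` snd a))"

definition cut_value ::
  "'a::metric_space \<Rightarrow> 'a \<Rightarrow> 'a set \<Rightarrow> real \<Rightarrow> real \<Rightarrow> (('a \<times> 'a set) \<Rightarrow> real) \<Rightarrow> 'a set \<Rightarrow> real" where
  "cut_value s r T N0 \<alpha> P S =
     (\<Sum>a\<in>{(i, J). (i, J) \<in> hyperarcs s r T \<and> i \<in> S \<and> \<not> J \<subseteq> S}. capacity N0 \<alpha> P a)"

definition rate_st ::
  "'a::metric_space \<Rightarrow> 'a \<Rightarrow> 'a set \<Rightarrow> real \<Rightarrow> real \<Rightarrow> (('a \<times> 'a set) \<Rightarrow> real) \<Rightarrow> 'a \<Rightarrow> real" where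
  "rate_st s r T N0 \<alpha> P t =
     Min (cut_value s r T N0 \<alpha> P ` {S. S \<subseteq> insert s (insert r T) \<and> s \<in> S \<and> t \<notin> S})"

definition rate_sT ::
  "'a::metric_space \<Rightarrow> 'a \<Rightarrow> 'a set \<Rightarrow> real \<Rightarrow> real \<Rightarrow> (('a \<times> 'a set) \<Rightarrow> real) \<Rightarrow> real" where
  "rate_sT s r T N0 \<alpha> P = Min (rate_st s r T N0 \<alpha> P ` T)"

definition opt_rate ::
  "'a::metric_space \<Rightarrow> 'a set \<Rightarrow> real \<Rightarrow> real \<Rightarrow> real \<Rightarrow> real \<Rightarrow> 'a \<Rightarrow> real" where
  "opt_rate s T Ps Pr N0 \<alpha> r =
     (SUP P\<in>power_allocs s r T Ps Pr. rate_sT s r T N0 \<alpha> P)"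

end

theory Submission
  imports Defs
begin

text \<open>Let \<open>t\<close> be the last receiver, \<open>D = D\<^sub>s\<^sub>t\<close> and \<open>g = \<gamma>^(1/\<alpha>)\<close>, so that \<open>P\<^sub>r = g^\<alpha> P\<^sub>s\<close>.
  We show that \<open>c = (P\<^sub>s / N\<^sub>0) ((1 + g) / D)^\<alpha>\<close> is an upper bound on \<open>R\<^sup>*\<^sub>s\<^sub>T(r)\<close> for every
  relay position \<open>r\<close>, and that it is attained at \<open>r\<^sup>\<circ>\<close>.

  Converse: mixing, with weights \<open>\<lambda>\<close> and \<open>1 - \<lambda>\<close>, the cut isolating \<open>t\<close> and the cut
  isolating \<open>t\<close> together with the relay gives the cut-set bound of
  \<open>cut_set_bound\<close>; choosing \<open>\<lambda>\<close> according to the source--relay distance and using a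
  convexity inequality for \<open>x \<mapsto> x^\<alpha>\<close> (\<open>relay_tradeoff_ineq\<close>) yields \<open>R\<^sub>s\<^sub>T \<le> c\<close>
  (\<open>relay_rate_upper_bound\<close>).

  Achievability: at \<open>r\<^sup>\<circ>\<close> the source broadcasts to the relay and to the receivers of the
  disk \<open>C\<^sub>s\<close>, and the relay forwards to the remaining receivers, which lie in \<open>C\<^sub>r\<close>.  Every
  separating cut is crossed by one of these two hyperarcs, and the choice of \<open>D\<^sub>s\<^sub>r\<^sub>\<circ>\<close>
  makes both capacities equal to \<open>c\<close> (\<open>balanced_relay_achieves\<close>).\<close>

lemma powr_increment_mono:
  fixes a b c \<alpha> :: real
  assumes "\<alpha> \<ge> 1" "0 < c" "c \<le> a" "0 \<le> b"
  shows "(c + b) powr \<alpha> - c powr \<alpha> \<le> (a + b) powr \<alpha> - a powr \<alpha>"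
proof (cases "b = 0 \<or> c = a")
  case True
  then show ?thesis by auto
next
  case False
  then have "c < a" "0 < b" using assms by auto
  define \<theta> where "\<theta> = b / (a + b - c)"
  have \<theta>: "0 \<le> \<theta>" "\<theta> \<le> 1" "\<theta> * (a + b - c) = b"
    using \<open>c < a\<close> \<open>0 < b\<close> unfolding \<theta>_def by (auto simp: field_simps)
  have cvx: "convex_on {0<..} (\<lambda>x::real. x powr \<alpha>)"
    using powr_convex assms(1) by blast
  \<comment> \<open>Both \<open>a\<close> and \<open>c + b\<close> lie between \<open>c\<close> and \<open>a + b\<close>, with complementary weights.\<close>
  have "a = (1 - (1 - \<theta>)) *\<^sub>R c + (1 - \<theta>) *\<^sub>R (a + b)"
    and "c + b = (1 - \<theta>) *\<^sub>R c + \<theta> *\<^sub>R (a + b)"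
    using \<theta>(3) by (simp_all add: algebra_simps)
  then have "a powr \<alpha> \<le> \<theta> * c powr \<alpha> + (1 - \<theta>) * (a + b) powr \<alpha>"
    and "(c + b) powr \<alpha> \<le> (1 - \<theta>) * c powr \<alpha> + \<theta> * (a + b) powr \<alpha>"
    using convex_onD[OF cvx, of "1 - \<theta>" c "a + b"] convex_onD[OF cvx, of \<theta> c "a + b"]
      \<theta> assms \<open>c < a\<close> by auto
  then show ?thesis by (simp add: algebra_simps)
qed

text \<open>The scalar inequality behind the converse for a relay near the source: with \<open>x\<close> the
  source--relay distance and \<open>y \<ge> 1 - x\<close> the relay--receiver distance, both normalised by
  \<open>D\<^sub>s\<^sub>t\<close>, and \<open>x < 1/(1 + g)\<close>, the rate factor never exceeds \<open>(1 + g)^\<alpha>\<close>.  It is the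
  increment comparison above at the base points \<open>g x \<le> 1 - x\<close> with increment \<open>g (1 - x)\<close>.\<close>
lemma relay_tradeoff_ineq:
  fixes x y g \<alpha> :: real
  assumes "\<alpha> \<ge> 1" "0 < x" "g > 0" "x * (1 + g) < 1" "y \<ge> 1 - x"
  shows "1 + (1 - x powr \<alpha>) * g powr \<alpha> / y powr \<alpha> \<le> (1 + g) powr \<alpha>"
proof -
  define q where "q = 1 - x"
  have "x < 1" using assms by (smt (verit) mult_less_cancel_left1 mult.commute)
  then have q: "0 < q" "g * x \<le> q" "q \<le> y"
    using assms unfolding q_def by (auto simp: algebra_simps)
  have "(g * x + g * q) powr \<alpha> - (g * x) powr \<alpha> \<le> (q + g * q) powr \<alpha> - q powr \<alpha>"
    using powr_increment_mono[of \<alpha> "g * x" q "g * q"] assms q by auto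
  moreover have "g * x + g * q = g" "q + g * q = (1 + g) * q"
    unfolding q_def by (simp_all add: algebra_simps)
  ultimately have "g powr \<alpha> - g powr \<alpha> * x powr \<alpha> \<le> (1 + g) powr \<alpha> * q powr \<alpha> - q powr \<alpha>"
    using assms q by (simp add: powr_mult)
  then have key: "(1 - x powr \<alpha>) * g powr \<alpha> \<le> ((1 + g) powr \<alpha> - 1) * q powr \<alpha>"
    by (simp add: algebra_simps)
  have "x powr \<alpha> \<le> 1" using \<open>x < 1\<close> assms by (simp add: powr_le1)
  moreover have "q powr \<alpha> \<le> y powr \<alpha>" using assms q by (intro powr_mono2) auto
  moreover have "q powr \<alpha> > 0" using q by simp
  ultimately have "(1 - x powr \<alpha>) * g powr \<alpha> / y powr \<alpha> \<le> (1 - x powr \<alpha>) * g powr \<alpha> / q powr \<alpha>"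
    by (intro divide_left_mono mult_nonneg_nonneg mult_pos_pos) auto
  also have "\<dots> \<le> (1 + g) powr \<alpha> - 1"
    using key \<open>q powr \<alpha> > 0\<close> by (simp add: divide_le_eq mult.commute)
  finally show ?thesis by simp
qed

lemma relay_tradeoff_scaled:
  fixes D dsr drt g \<alpha> :: real
  assumes \<alpha>: "\<alpha> \<ge> 1" and g: "g > 0" and dsr: "0 < dsr" "dsr < D / (1 + g)"
    and tri: "D \<le> dsr + drt" and drt: "drt > 0"
  shows "1 / D powr \<alpha> + (1 - (dsr / D) powr \<alpha>) / drt powr \<alpha> * g powr \<alpha> \<le> ((1 + g) / D) powr \<alpha>"
proof -
  have D: "D > 0" using dsr g by (smt (verit) divide_nonpos_pos)
  define x where "x = dsr / D"
  have x: "0 < x" "x * (1 + g) < 1" using dsr D g unfolding x_def by (auto simp: field_simps)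
  have "1 - x = (D - dsr) / D" unfolding x_def using D by (simp add: diff_divide_distrib)
  also have "\<dots> \<le> drt / D" using tri D by (intro divide_right_mono) auto
  finally have "1 + (1 - x powr \<alpha>) * g powr \<alpha> / (drt / D) powr \<alpha> \<le> (1 + g) powr \<alpha>"
    using relay_tradeoff_ineq \<alpha> x g by blast
  then have "(1 + (1 - x powr \<alpha>) * g powr \<alpha> * D powr \<alpha> / drt powr \<alpha>) / D powr \<alpha>
      \<le> (1 + g) powr \<alpha> / D powr \<alpha>"
    using D drt by (simp add: powr_divide divide_right_mono)
  then show ?thesis unfolding x_def using D g by (simp add: field_simps powr_divide)
qed

lemma finite_hyperarcs:
  assumes "finite T"
  shows "finite (hyperarcs s r T)"
proof (rule finite_subset)
  show "hyperarcs s r T \<subseteq> {s, r} \<times> Pow (insert r T)" unfolding hyperarcs_def by auto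
  show "finite ({s, r} \<times> Pow (insert r T))" using assms by simp
qed

lemma sum_hyperarcs:
  assumes "s \<noteq> r" "finite T"
  shows "(\<Sum>a\<in>hyperarcs s r T. f a) =
    (\<Sum>J\<in>{J. (s, J) \<in> hyperarcs s r T}. f (s, J)) + (\<Sum>J\<in>{J. (r, J) \<in> hyperarcs s r T}. f (r, J))"
proof -
  define Js where "Js = {J. (s, J) \<in> hyperarcs s r T}"
  define Jr where "Jr = {J. (r, J) \<in> hyperarcs s r T}"
  have arcs: "hyperarcs s r T = Pair s ` Js \<union> Pair r ` Jr"
    unfolding Js_def Jr_def hyperarcs_def by auto
  have fin: "finite (Pair s ` Js)" "finite (Pair r ` Jr)"
    using finite_hyperarcs[OF assms(2), of s r] unfolding arcs by simp_all
  have disj: "Pair s ` Js \<inter> Pair r ` Jr = {}" using assms(1) by auto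
  have "(\<Sum>a\<in>hyperarcs s r T. f a) = sum f (Pair s ` Js) + sum f (Pair r ` Jr)"
    unfolding arcs by (rule sum.union_disjoint[OF fin disj])
  also have "\<dots> = (\<Sum>J\<in>Js. f (s, J)) + (\<Sum>J\<in>Jr. f (r, J))"
    by (simp add: sum.reindex inj_on_def)
  finally show ?thesis unfolding Js_def Jr_def .
qed

definition leaving_capacity ::
  "real \<Rightarrow> real \<Rightarrow> (('a::metric_space \<times> 'a set) \<Rightarrow> real) \<Rightarrow> 'a set \<Rightarrow> 'a \<times> 'a set \<Rightarrow> real" where
  "leaving_capacity N0 \<alpha> P S a = (if fst a \<in> S \<and> \<not> snd a \<subseteq> S then capacity N0 \<alpha> P a else 0)"

lemma cut_value_eq_sum_leaving:
  assumes "finite T"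
  shows "cut_value s r T N0 \<alpha> P S = (\<Sum>a\<in>hyperarcs s r T. leaving_capacity N0 \<alpha> P S a)"
proof -
  have "{(i, J). (i, J) \<in> hyperarcs s r T \<and> i \<in> S \<and> \<not> J \<subseteq> S} =
        {a \<in> hyperarcs s r T. fst a \<in> S \<and> \<not> snd a \<subseteq> S}" by auto
  then show ?thesis
    unfolding cut_value_def leaving_capacity_def
    using sum.inter_filter[OF finite_hyperarcs[OF assms]] by simp
qed

lemma capacity_nonneg:
  assumes "finite J" "J \<noteq> {}" "P (i, J) \<ge> 0" "N0 > 0"
  shows "capacity N0 \<alpha> P (i, J) \<ge> 0"
proof -
  obtain j where j: "j \<in> J" using assms by auto
  have "0 \<le> dist i j powr \<alpha>" by simp
  also have "\<dots> \<le> Max ((\<lambda>j. dist i j powr \<alpha>) ` J)" using assms j by (intro Max_ge) auto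
  finally show ?thesis unfolding capacity_def using assms by simp
qed

lemma capacity_le_dist:
  assumes "finite J" "j \<in> J" "i \<noteq> j" "P (i, J) \<ge> 0" "N0 > 0"
  shows "capacity N0 \<alpha> P (i, J) \<le> (1 / dist i j powr \<alpha>) / N0 * P (i, J)"
proof -
  let ?M = "Max ((\<lambda>j. dist i j powr \<alpha>) ` J)"
  have pos: "dist i j powr \<alpha> > 0" using assms by simp
  have le: "dist i j powr \<alpha> \<le> ?M" using assms by (intro Max_ge) auto
  have Mpos: "0 < ?M" using pos le by linarith
  have "P (i, J) / (N0 * ?M) \<le> P (i, J) / (N0 * dist i j powr \<alpha>)"
    by (intro divide_left_mono mult_left_mono mult_pos_pos) (use assms(4,5) pos le Mpos in auto)
  then show ?thesis unfolding capacity_def by (simp add: mult.commute)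
qed

lemma capacity_ge_radius:
  assumes "finite J" "J \<noteq> {}" "\<forall>j\<in>J. i \<noteq> j \<and> dist i j \<le> d" "P (i, J) \<ge> 0" "N0 > 0" "\<alpha> \<ge> 0"
  shows "P (i, J) / (N0 * d powr \<alpha>) \<le> capacity N0 \<alpha> P (i, J)"
proof -
  let ?M = "Max ((\<lambda>j. dist i j powr \<alpha>) ` J)"
  obtain j where j: "j \<in> J" using assms by auto
  have le: "?M \<le> d powr \<alpha>" using assms by (auto simp: Max_le_iff intro: powr_mono2)
  have "0 < dist i j powr \<alpha>" using assms j by simp
  also have "\<dots> \<le> ?M" using assms j by (intro Max_ge) auto
  finally have Mpos: "0 < ?M" .
  have "0 < d powr \<alpha>" using le Mpos by linarith
  then have denom_pos: "0 < (N0 * d powr \<alpha>) * (N0 * ?M)" using Mpos assms(5) by simp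
  have denom_le: "N0 * ?M \<le> N0 * d powr \<alpha>" using le assms(5) by simp
  show ?thesis
    unfolding capacity_def prod.sel using divide_left_mono[OF denom_le assms(4) denom_pos] .
qed

lemma leaving_capacity_bounds:
  assumes "finite J" "J \<noteq> {}" "P (i, J) \<ge> 0" "N0 > 0"
  shows "0 \<le> leaving_capacity N0 \<alpha> P S (i, J)" "leaving_capacity N0 \<alpha> P S (i, J) \<le> capacity N0 \<alpha> P (i, J)"
  using capacity_nonneg[of J P i N0 \<alpha>, OF assms] unfolding leaving_capacity_def by auto

lemma rate_sT_le_cut_value:
  assumes "finite T" "t \<in> T" "S \<subseteq> insert s (insert r T)" "s \<in> S" "t \<notin> S"
  shows "rate_sT s r T N0 \<alpha> P \<le> cut_value s r T N0 \<alpha> P S"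
proof -
  have cuts: "finite {S. S \<subseteq> insert s (insert r T) \<and> s \<in> S \<and> t \<notin> S}"
    by (rule finite_subset[of _ "Pow (insert s (insert r T))"]) (use assms(1) in auto)
  have "rate_sT s r T N0 \<alpha> P \<le> rate_st s r T N0 \<alpha> P t"
    unfolding rate_sT_def using assms(1,2) by (intro Min_le) auto
  also have "\<dots> \<le> cut_value s r T N0 \<alpha> P S"
    unfolding rate_st_def using cuts assms(3-5) by (intro Min_le) auto
  finally show ?thesis .
qed

text \<open>We mix the cut \<open>A\<close> that isolates the
  receiver \<open>t\<close> (weight \<open>\<lambda>\<close>) with the cut \<open>B\<close> that isolates \<open>t\<close> together with the
  relay (weight \<open>1 - \<lambda>\<close>); a source hyperarc then contributes at most
  \<open>max (1/D\<^sub>s\<^sub>t^\<alpha>) ((1-\<lambda>)/D\<^sub>s\<^sub>r^\<alpha>)\<close> per unit of power.\<close>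
lemma source_arc_cut_bound:
  fixes s r t :: "'a::metric_space"
  assumes "finite T" "t \<in> T" "s \<notin> T" "r \<notin> insert s T"
    and J: "J \<subseteq> insert r T" "J \<noteq> {}" and P: "P (s, J) \<ge> 0" and N0: "N0 > 0"
    and lm: "0 \<le> lm" "lm \<le> 1"
  shows "lm * leaving_capacity N0 \<alpha> P (insert s (insert r T) - {t}) (s, J)
       + (1 - lm) * leaving_capacity N0 \<alpha> P (insert s T - {t}) (s, J)
       \<le> max (1 / dist s t powr \<alpha>) ((1 - lm) / dist s r powr \<alpha>) / N0 * P (s, J)"
    (is "lm * ?lcA + (1 - lm) * ?lcB \<le> ?M / N0 * _")
proof -
  have finJ: "finite J" using finite_subset[OF J(1)] assms(1) by simp
  note lc = leaving_capacity_bounds[where i=s and J=J and P=P, OF finJ J(2) P N0, of \<alpha>]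
  have M_nonneg: "0 \<le> ?M" by (simp add: le_max_iff_disj)
  consider (receiver) "t \<in> J" | (relay) "t \<notin> J" "r \<in> J" | (neither) "t \<notin> J" "r \<notin> J" by blast
  then show ?thesis
  proof cases
    case receiver
    have "lm * ?lcA + (1 - lm) * ?lcB \<le> lm * capacity N0 \<alpha> P (s, J) + (1 - lm) * capacity N0 \<alpha> P (s, J)"
      using lc lm by (intro add_mono mult_left_mono) auto
    also have "\<dots> = capacity N0 \<alpha> P (s, J)" by (simp add: algebra_simps)
    also have "\<dots> \<le> (1 / dist s t powr \<alpha>) / N0 * P (s, J)"
      using assms(2,3) by (intro capacity_le_dist finJ receiver P N0) auto
    also have "\<dots> \<le> ?M / N0 * P (s, J)"
      using P N0 by (intro mult_right_mono divide_right_mono) auto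
    finally show ?thesis .
  next
    case relay
    then have lcA_zero: "?lcA = 0" using J(1) by (auto simp: leaving_capacity_def)
    have "s \<noteq> r" using assms(4) by auto
    from order_trans[OF lc(2) capacity_le_dist[where i=s and J=J and P=P, OF finJ relay(2) this P N0]]
    have "?lcB \<le> (1 / dist s r powr \<alpha>) / N0 * P (s, J)" .
    then have "(1 - lm) * ?lcB \<le> (1 - lm) * ((1 / dist s r powr \<alpha>) / N0 * P (s, J))"
      using lm by (intro mult_left_mono) auto
    moreover have "(1 - lm) * ((1 / dist s r powr \<alpha>) / N0 * P (s, J)) = ((1 - lm) / dist s r powr \<alpha>) / N0 * P (s, J)"
      by simp
    moreover have "\<dots> \<le> ?M / N0 * P (s, J)"
      using P N0 by (intro mult_right_mono divide_right_mono) auto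
    ultimately show ?thesis using lcA_zero by simp
  next
    case neither
    then have "?lcA = 0" "?lcB = 0" using J(1) by (auto simp: leaving_capacity_def)
    then show ?thesis using M_nonneg P N0 by simp
  qed
qed

text \<open>In the same mixture a relay hyperarc only crosses the cut \<open>A\<close>, and only if it
  reaches \<open>t\<close>.\<close>
lemma relay_arc_cut_bound:
  fixes s r t :: "'a::metric_space"
  assumes "finite T" "t \<in> T" "r \<notin> insert s T"
    and J: "J \<subseteq> T" "J \<noteq> {}" and P: "P (r, J) \<ge> 0" and N0: "N0 > 0" and lm: "0 \<le> lm"
  shows "lm * leaving_capacity N0 \<alpha> P (insert s (insert r T) - {t}) (r, J)
       + (1 - lm) * leaving_capacity N0 \<alpha> P (insert s T - {t}) (r, J)
       \<le> lm / dist r t powr \<alpha> / N0 * P (r, J)"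
proof -
  have finJ: "finite J" using finite_subset[OF J(1)] assms(1) by simp
  have "leaving_capacity N0 \<alpha> P (insert s T - {t}) (r, J) = 0"
    using assms(3) by (simp add: leaving_capacity_def)
  moreover have "lm * leaving_capacity N0 \<alpha> P (insert s (insert r T) - {t}) (r, J)
      \<le> lm * ((1 / dist r t powr \<alpha>) / N0 * P (r, J))"
  proof (cases "t \<in> J")
    case True
    have "leaving_capacity N0 \<alpha> P (insert s (insert r T) - {t}) (r, J) \<le> capacity N0 \<alpha> P (r, J)"
      by (rule leaving_capacity_bounds(2)[where i=r and J=J and P=P, OF finJ J(2) P N0])
    also have "\<dots> \<le> (1 / dist r t powr \<alpha>) / N0 * P (r, J)"
      using assms(2,3) by (intro capacity_le_dist finJ True P N0) auto
    finally show ?thesis using lm by (rule mult_left_mono)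
  next
    case False
    then have "J \<subseteq> insert s (insert r T) - {t}" using J(1) by auto
    then show ?thesis using P N0 lm by (simp add: leaving_capacity_def)
  qed
  ultimately show ?thesis by simp
qed

lemma cut_set_bound:
  fixes s r t :: "'a::metric_space"
  assumes finT: "finite T" and tT: "t \<in> T" and sT: "s \<notin> T" and rN: "r \<notin> insert s T"
    and N0: "N0 > 0" and P: "P \<in> power_allocs s r T Ps Pr" and lm: "0 \<le> lm" "lm \<le> 1"
  shows "rate_sT s r T N0 \<alpha> P \<le>
    (max (1 / dist s t powr \<alpha>) ((1 - lm) / dist s r powr \<alpha>) * Ps + lm / dist r t powr \<alpha> * Pr) / N0"
proof -
  define A where "A = insert s (insert r T) - {t}"
  define B where "B = insert s T - {t}"
  define M where "M = max (1 / dist s t powr \<alpha>) ((1 - lm) / dist s r powr \<alpha>)"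
  let ?H = "hyperarcs s r T" and ?lc = "leaving_capacity N0 \<alpha> P"
  let ?mix = "\<lambda>a. lm * ?lc A a + (1 - lm) * ?lc B a"
  have sr: "s \<noteq> r" using rN by auto
  have P_nonneg: "\<And>a. a \<in> ?H \<Longrightarrow> P a \<ge> 0"
    and budget: "(\<Sum>J\<in>{J. (s, J) \<in> ?H}. P (s, J)) \<le> Ps" "(\<Sum>J\<in>{J. (r, J) \<in> ?H}. P (r, J)) \<le> Pr"
    using P unfolding power_allocs_def by auto
  have "rate_sT s r T N0 \<alpha> P \<le> cut_value s r T N0 \<alpha> P A"
    "rate_sT s r T N0 \<alpha> P \<le> cut_value s r T N0 \<alpha> P B"
    unfolding A_def B_def using finT tT sT by (auto intro: rate_sT_le_cut_value)
  then have "lm * rate_sT s r T N0 \<alpha> P + (1 - lm) * rate_sT s r T N0 \<alpha> P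
      \<le> lm * cut_value s r T N0 \<alpha> P A + (1 - lm) * cut_value s r T N0 \<alpha> P B"
    using lm by (intro add_mono mult_left_mono) auto
  then have "rate_sT s r T N0 \<alpha> P \<le> lm * cut_value s r T N0 \<alpha> P A + (1 - lm) * cut_value s r T N0 \<alpha> P B"
    by (simp add: algebra_simps)
  also have "\<dots> = (\<Sum>a\<in>?H. ?mix a)"
    unfolding cut_value_eq_sum_leaving[OF finT] by (simp add: sum.distrib sum_distrib_left)
  also have "\<dots> = (\<Sum>J\<in>{J. (s, J) \<in> ?H}. ?mix (s, J)) + (\<Sum>J\<in>{J. (r, J) \<in> ?H}. ?mix (r, J))"
    by (rule sum_hyperarcs[OF sr finT])
  also have "\<dots> \<le> (\<Sum>J\<in>{J. (s, J) \<in> ?H}. M / N0 * P (s, J))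
      + (\<Sum>J\<in>{J. (r, J) \<in> ?H}. lm / dist r t powr \<alpha> / N0 * P (r, J))"
  proof (intro add_mono sum_mono)
    fix J assume "J \<in> {J. (s, J) \<in> ?H}"
    then have "J \<subseteq> insert r T" "J \<noteq> {}" "P (s, J) \<ge> 0"
      using P_nonneg sr unfolding hyperarcs_def by auto
    then show "?mix (s, J) \<le> M / N0 * P (s, J)"
      unfolding A_def B_def M_def using source_arc_cut_bound finT tT sT rN N0 lm by blast
  next
    fix J assume "J \<in> {J. (r, J) \<in> ?H}"
    then have "J \<subseteq> T" "J \<noteq> {}" "P (r, J) \<ge> 0"
      using P_nonneg sr unfolding hyperarcs_def by auto
    then show "?mix (r, J) \<le> lm / dist r t powr \<alpha> / N0 * P (r, J)"
      unfolding A_def B_def using relay_arc_cut_bound finT tT rN N0 lm by blast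
  qed
  also have "\<dots> \<le> M / N0 * Ps + lm / dist r t powr \<alpha> / N0 * Pr"
    using budget lm N0 unfolding sum_distrib_left[symmetric] M_def
    by (intro add_mono mult_left_mono) (auto simp: le_max_iff_disj)
  also have "\<dots> = (M * Ps + lm / dist r t powr \<alpha> * Pr) / N0"
    by (simp add: add_divide_distrib)
  finally show ?thesis unfolding M_def .
qed

text \<open>A relay at least \<open>D\<^sub>s\<^sub>t / (1 + g)\<close> away from the source is handled by \<open>\<lambda> = 0\<close>,
  a closer one by \<open>\<lambda> = 1 - (D\<^sub>s\<^sub>r / D\<^sub>s\<^sub>t)^\<alpha>\<close> and the scalar inequality above.\<close>
lemma relay_rate_upper_bound:
  fixes s r t :: "'a::metric_space"
  assumes finT: "finite T" and tT: "t \<in> T" and sT: "s \<notin> T" and rN: "r \<notin> insert s T"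
    and N0: "N0 > 0" and Ps: "Ps \<ge> 0" and \<alpha>: "\<alpha> \<ge> 1" and g: "g > 0" and \<gamma>: "\<gamma> = g powr \<alpha>"
    and P: "P \<in> power_allocs s r T Ps (\<gamma> * Ps)"
  shows "rate_sT s r T N0 \<alpha> P \<le> Ps / N0 * ((1 + g) / dist s t) powr \<alpha>"
proof -
  define D where "D = dist s t"
  define K where "K = ((1 + g) / D) powr \<alpha>"
  have D: "D > 0" unfolding D_def using tT sT by auto
  have dsr: "dist s r > 0" and drt: "dist r t > 0" using rN tT by auto
  have K: "K = (1 + g) powr \<alpha> / D powr \<alpha>" unfolding K_def using D g by (simp add: powr_divide)
  have "1 \<le> (1 + g) powr \<alpha>" using g \<alpha> by (intro ge_one_powr_ge_zero) auto
  then have far_receiver: "1 / D powr \<alpha> \<le> K" unfolding K using D by (simp add: divide_right_mono)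
  consider (far) "D / (1 + g) \<le> dist s r" | (near) "dist s r < D / (1 + g)" by linarith
  then show ?thesis
  proof cases
    case far
    have bound: "rate_sT s r T N0 \<alpha> P \<le> max (1 / D powr \<alpha>) (1 / dist s r powr \<alpha>) * Ps / N0"
      using cut_set_bound[where \<alpha>=\<alpha> and lm=0, OF finT tT sT rN N0 P] unfolding D_def by simp
    have "(D / (1 + g)) powr \<alpha> \<le> dist s r powr \<alpha>" using far D g \<alpha> by (intro powr_mono2) auto
    then have "1 / dist s r powr \<alpha> \<le> 1 / (D / (1 + g)) powr \<alpha>"
      using D g dsr by (intro divide_left_mono mult_pos_pos) auto
    also have "\<dots> = K" unfolding K using D g by (simp add: powr_divide)
    finally have "max (1 / D powr \<alpha>) (1 / dist s r powr \<alpha>) \<le> K" using far_receiver by simp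
    then have "max (1 / D powr \<alpha>) (1 / dist s r powr \<alpha>) * Ps / N0 \<le> K * Ps / N0"
      using Ps N0 by (intro divide_right_mono mult_right_mono) auto
    then show ?thesis using bound unfolding K_def D_def by (simp add: mult.commute)
  next
    case near
    define x where "x = dist s r / D"
    define lm where "lm = 1 - x powr \<alpha>"
    have x: "0 < x" "x * (1 + g) < 1" using near dsr D g unfolding x_def by (auto simp: field_simps)
    then have "x < 1" using g by (smt (verit) mult_less_cancel_left1 mult.commute)
    then have lm: "0 \<le> lm" "lm \<le> 1" unfolding lm_def using x \<alpha> by (auto simp: powr_le1)
    have source_term: "(1 - lm) / dist s r powr \<alpha> = 1 / D powr \<alpha>"
      unfolding lm_def x_def using dsr D by (simp add: powr_divide)
    have bound: "rate_sT s r T N0 \<alpha> P \<le> (1 / D powr \<alpha> * Ps + lm / dist r t powr \<alpha> * (\<gamma> * Ps)) / N0"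
      using cut_set_bound[where \<alpha>=\<alpha>, OF finT tT sT rN N0 P lm] source_term unfolding D_def by simp
    have tri: "D \<le> dist s r + dist r t" unfolding D_def by (rule dist_triangle)
    have "1 / D powr \<alpha> + lm / dist r t powr \<alpha> * \<gamma> \<le> K"
      using relay_tradeoff_scaled[OF \<alpha> g dsr near tri drt] unfolding K_def lm_def x_def \<gamma> .
    then have "(1 / D powr \<alpha> + lm / dist r t powr \<alpha> * \<gamma>) * Ps / N0 \<le> K * Ps / N0"
      using Ps N0 by (intro divide_right_mono mult_right_mono) auto
    then show ?thesis using bound unfolding K_def D_def by (simp add: algebra_simps)
  qed
qed

lemma capacity_le_cut_value:
  assumes finT: "finite T" and P: "\<forall>a\<in>hyperarcs s r T. P a \<ge> 0" and N0: "N0 > 0"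
    and a: "a \<in> hyperarcs s r T" "fst a \<in> S" "\<not> snd a \<subseteq> S"
  shows "capacity N0 \<alpha> P a \<le> cut_value s r T N0 \<alpha> P S"
proof -
  have nonneg: "0 \<le> leaving_capacity N0 \<alpha> P S b" if "b \<in> hyperarcs s r T" for b
  proof -
    obtain i J where b: "b = (i, J)" by fastforce
    have "J \<noteq> {}" "J \<subseteq> insert r T" using that unfolding b hyperarcs_def by auto
    then show ?thesis
      using leaving_capacity_bounds(1)[where i=i and J=J and P=P] P that finT N0 b
      by (meson finite_insert finite_subset)
  qed
  have "capacity N0 \<alpha> P a = leaving_capacity N0 \<alpha> P S a"
    using a by (simp add: leaving_capacity_def)
  also have "\<dots> \<le> (\<Sum>b\<in>hyperarcs s r T. leaving_capacity N0 \<alpha> P S b)"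
    using nonneg by (intro member_le_sum[OF a(1)] finite_hyperarcs[OF finT]) auto
  finally show ?thesis unfolding cut_value_eq_sum_leaving[OF finT] .
qed

lemma rate_sT_ge_cuts:
  assumes "finite T" "T \<noteq> {}" "s \<notin> T"
    and cuts: "\<And>S u. S \<subseteq> insert s (insert r T) \<Longrightarrow> s \<in> S \<Longrightarrow> u \<in> T \<Longrightarrow> u \<notin> S \<Longrightarrow>
      m \<le> cut_value s r T N0 \<alpha> P S"
  shows "m \<le> rate_sT s r T N0 \<alpha> P"
proof -
  have "m \<le> rate_st s r T N0 \<alpha> P u" if u: "u \<in> T" for u
  proof -
    have "finite {S. S \<subseteq> insert s (insert r T) \<and> s \<in> S \<and> u \<notin> S}"
      by (rule finite_subset[of _ "Pow (insert s (insert r T))"]) (use assms(1) in auto)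
    moreover have "{s} \<in> {S. S \<subseteq> insert s (insert r T) \<and> s \<in> S \<and> u \<notin> S}"
      using u assms(3) by auto
    ultimately show ?thesis unfolding rate_st_def using cuts u by (subst Min_ge_iff) auto
  qed
  then show ?thesis unfolding rate_sT_def using assms(1,2) by (subst Min_ge_iff) auto
qed

definition two_hop_alloc ::
  "'a \<Rightarrow> 'a \<Rightarrow> 'a set \<Rightarrow> 'a set \<Rightarrow> real \<Rightarrow> real \<Rightarrow> ('a \<times> 'a set) \<Rightarrow> real" where
  "two_hop_alloc s r T Ts Ps Pr a =
     (if a = (s, insert r Ts) then Ps else if a = (r, T - Ts) then Pr else 0)"

lemma two_hop_alloc_admissible:
  assumes "s \<noteq> r" "finite T" "Ps \<ge> 0" "Pr \<ge> 0"
  shows "two_hop_alloc s r T Ts Ps Pr \<in> power_allocs s r T Ps Pr"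
proof -
  let ?P = "two_hop_alloc s r T Ts Ps Pr"
  have fin: "finite {J. (i, J) \<in> hyperarcs s r T}" for i
    by (rule finite_subset[of _ "Pow (insert r T)"]) (auto simp: hyperarcs_def assms(2))
  have "(\<Sum>J\<in>{J. (s, J) \<in> hyperarcs s r T}. ?P (s, J))
      = (\<Sum>J\<in>{J. (s, J) \<in> hyperarcs s r T}. if J = insert r Ts then Ps else 0)"
    using assms(1) by (intro sum.cong) (auto simp: two_hop_alloc_def)
  also have "\<dots> \<le> Ps" using fin assms(3) by (simp add: sum.delta)
  finally have source: "(\<Sum>J\<in>{J. (s, J) \<in> hyperarcs s r T}. ?P (s, J)) \<le> Ps" .
  have "(\<Sum>J\<in>{J. (r, J) \<in> hyperarcs s r T}. ?P (r, J))
      = (\<Sum>J\<in>{J. (r, J) \<in> hyperarcs s r T}. if J = T - Ts then Pr else 0)"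
    using assms(1) by (intro sum.cong) (auto simp: two_hop_alloc_def)
  also have "\<dots> \<le> Pr" using fin assms(4) by (simp add: sum.delta)
  finally have relay: "(\<Sum>J\<in>{J. (r, J) \<in> hyperarcs s r T}. ?P (r, J)) \<le> Pr" .
  show ?thesis
    unfolding power_allocs_def using source relay assms(3,4) by (auto simp: two_hop_alloc_def)
qed

text \<open>Achievability: if the near receivers \<open>Ts\<close> and the relay lie within distance \<open>d\<^sub>1\<close> of
  the source and the other receivers within \<open>d\<^sub>2\<close> of the relay, the two-hop allocation
  attains \<open>min (P\<^sub>s / (N\<^sub>0 d\<^sub>1^\<alpha>)) (P\<^sub>r / (N\<^sub>0 d\<^sub>2^\<alpha>))\<close>, since every separating cut is crossed
  by one of its two hyperarcs.\<close>
lemma two_hop_rate_lower_bound: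
  fixes s r :: "'a::metric_space"
  assumes finT: "finite T" and sT: "s \<notin> T" and rN: "r \<notin> insert s T" and Ts: "Ts \<subseteq> T"
    and far: "T - Ts \<noteq> {}" and near_dist: "\<forall>u\<in>Ts. dist s u \<le> d1" and relay_dist: "dist s r \<le> d1"
    and far_dist: "\<forall>u\<in>T - Ts. dist r u \<le> d2"
    and Ps: "Ps \<ge> 0" and Pr: "Pr \<ge> 0" and N0: "N0 > 0" and \<alpha>: "\<alpha> \<ge> 0"
  shows "min (Ps / (N0 * d1 powr \<alpha>)) (Pr / (N0 * d2 powr \<alpha>))
    \<le> rate_sT s r T N0 \<alpha> (two_hop_alloc s r T Ts Ps Pr)"
proof -
  let ?P = "two_hop_alloc s r T Ts Ps Pr" and ?m = "min (Ps / (N0 * d1 powr \<alpha>)) (Pr / (N0 * d2 powr \<alpha>))"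
  have sr: "s \<noteq> r" using rN by auto
  have arcs: "(s, insert r Ts) \<in> hyperarcs s r T" "(r, T - Ts) \<in> hyperarcs s r T"
    using Ts far unfolding hyperarcs_def by auto
  have P_nonneg: "\<forall>a\<in>hyperarcs s r T. ?P a \<ge> 0" using Ps Pr by (simp add: two_hop_alloc_def)
  have "Ps / (N0 * d1 powr \<alpha>) \<le> capacity N0 \<alpha> ?P (s, insert r Ts)"
    using capacity_ge_radius[where i=s and J="insert r Ts" and P="?P" and d=d1]
      finite_subset[OF Ts finT] near_dist relay_dist sT rN Ts Ps N0 \<alpha>
    by (auto simp: two_hop_alloc_def)
  then have source_arc: "?m \<le> capacity N0 \<alpha> ?P (s, insert r Ts)" by linarith
  have "Pr / (N0 * d2 powr \<alpha>) \<le> capacity N0 \<alpha> ?P (r, T - Ts)"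
    using capacity_ge_radius[where i=r and J="T - Ts" and P="?P" and d=d2]
      finT far far_dist rN Pr N0 \<alpha> sr
    by (auto simp: two_hop_alloc_def)
  then have relay_arc: "?m \<le> capacity N0 \<alpha> ?P (r, T - Ts)" by linarith
  show ?thesis
  proof (rule rate_sT_ge_cuts[OF finT _ sT])
    show "T \<noteq> {}" using far by auto
  next
    fix S u assume S: "s \<in> S" "u \<in> T" "u \<notin> S"
    show "?m \<le> cut_value s r T N0 \<alpha> ?P S"
    proof (cases "u \<in> Ts \<or> r \<notin> S")
      case True
      then have "?m \<le> capacity N0 \<alpha> ?P (s, insert r Ts)" using source_arc by simp
      also have "\<dots> \<le> cut_value s r T N0 \<alpha> ?P S"
        using True S by (intro capacity_le_cut_value[OF finT P_nonneg N0 arcs(1)]) auto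
      finally show ?thesis .
    next
      case False
      have "?m \<le> capacity N0 \<alpha> ?P (r, T - Ts)" using relay_arc .
      also have "\<dots> \<le> cut_value s r T N0 \<alpha> ?P S"
        using False S by (intro capacity_le_cut_value[OF finT P_nonneg N0 arcs(2)]) auto
      finally show ?thesis .
    qed
  qed
qed

lemma opt_rate_le:
  assumes "Ps \<ge> 0" "Pr \<ge> 0" "\<And>P. P \<in> power_allocs s r T Ps Pr \<Longrightarrow> rate_sT s r T N0 \<alpha> P \<le> c"
  shows "opt_rate s T Ps Pr N0 \<alpha> r \<le> c"
proof -
  have "(\<lambda>_. 0) \<in> power_allocs s r T Ps Pr" using assms(1,2) by (simp add: power_allocs_def)
  then show ?thesis unfolding opt_rate_def using assms(3) by (intro cSUP_least) auto
qed

lemma opt_rate_ge: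
  assumes "\<And>P. P \<in> power_allocs s r T Ps Pr \<Longrightarrow> rate_sT s r T N0 \<alpha> P \<le> c"
    and "P0 \<in> power_allocs s r T Ps Pr"
  shows "rate_sT s r T N0 \<alpha> P0 \<le> opt_rate s T Ps Pr N0 \<alpha> r"
  unfolding opt_rate_def using assms by (intro cSUP_upper bdd_aboveI2) auto

lemma balanced_relay_rates:
  fixes s t r0 :: "'a::euclidean_space"
  assumes seg: "r0 \<in> closed_segment s t" and r0: "dist s r0 = dist s t / (1 + g)"
    and "s \<noteq> t" "g > 0" "\<gamma> = g powr \<alpha>"
  shows "Ps / (N0 * dist s r0 powr \<alpha>) = Ps / N0 * ((1 + g) / dist s t) powr \<alpha>"
    and "\<gamma> * Ps / (N0 * dist r0 t powr \<alpha>) = Ps / N0 * ((1 + g) / dist s t) powr \<alpha>"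
proof -
  have D: "dist s t > 0" using assms(3) by simp
  have "dist s t = dist s r0 + dist r0 t" using seg by (simp add: between_mem_segment[symmetric] between)
  moreover have "dist s t = dist s r0 + g * dist s r0" using r0 assms(4) by (simp add: field_simps)
  ultimately have r0t: "dist r0 t = g * dist s r0" by linarith
  have near: "dist s r0 powr \<alpha> = (dist s t / (1 + g)) powr \<alpha>" using r0 by simp
  show source_hop: "Ps / (N0 * dist s r0 powr \<alpha>) = Ps / N0 * ((1 + g) / dist s t) powr \<alpha>"
    unfolding near using D assms(4) by (simp add: powr_divide)
  have "\<gamma> * Ps / (N0 * dist r0 t powr \<alpha>) = Ps / (N0 * dist s r0 powr \<alpha>)"
    unfolding r0t assms(5) using assms(4) by (simp add: powr_mult)
  then show "\<gamma> * Ps / (N0 * dist r0 t powr \<alpha>) = Ps / N0 * ((1 + g) / dist s t) powr \<alpha>"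
    unfolding source_hop .
qed

lemma balanced_relay_achieves:
  fixes s t r0 :: "'a::euclidean_space"
  assumes T: "finite T" "t \<in> T" "s \<notin> T" and r0N: "r0 \<notin> insert s T"
    and seg: "r0 \<in> closed_segment s t" and r0: "dist s r0 = dist s t / (1 + g)"
    and g: "g > 0" "\<gamma> = g powr \<alpha>"
    and cover: "T \<subseteq> cball s (dist s r0) \<union> cball r0 (dist r0 t)"
    and Ps: "Ps \<ge> 0" and N0: "N0 > 0" and \<alpha>: "\<alpha> \<ge> 0"
  shows "Ps / N0 * ((1 + g) / dist s t) powr \<alpha>
    \<le> rate_sT s r0 T N0 \<alpha> (two_hop_alloc s r0 T {u \<in> T. dist s u \<le> dist s r0} Ps (\<gamma> * Ps))"
proof -
  define Ts where "Ts = {u \<in> T. dist s u \<le> dist s r0}"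
  have st: "s \<noteq> t" using T by auto
  have "0 < dist s r0" using r0N by auto
  then have "0 < g * dist s r0" using g by simp
  moreover have "dist s r0 + g * dist s r0 = dist s t" using r0 g by (simp add: field_simps)
  ultimately have "t \<notin> Ts" unfolding Ts_def by auto
  then have far: "T - Ts \<noteq> {}" using T by auto
  have far_dist: "\<forall>u\<in>T - Ts. dist r0 u \<le> dist r0 t"
  proof
    fix u assume u: "u \<in> T - Ts"
    then have "u \<in> cball s (dist s r0) \<union> cball r0 (dist r0 t)" using cover by blast
    moreover have "u \<notin> cball s (dist s r0)" using u unfolding Ts_def by simp
    ultimately show "dist r0 u \<le> dist r0 t" by simp
  qed
  have "Ts \<subseteq> T" "\<forall>u\<in>Ts. dist s u \<le> dist s r0" unfolding Ts_def by auto
  from two_hop_rate_lower_bound[OF T(1,3) r0N this(1) far this(2) order_refl far_dist, of Ps "\<gamma> * Ps" N0 \<alpha>]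
  have "min (Ps / N0 * ((1 + g) / dist s t) powr \<alpha>) (Ps / N0 * ((1 + g) / dist s t) powr \<alpha>)
      \<le> rate_sT s r0 T N0 \<alpha> (two_hop_alloc s r0 T Ts Ps (\<gamma> * Ps))"
    using Ps g N0 \<alpha> unfolding balanced_relay_rates[OF seg r0 st g] by (simp add: zero_le_mult_iff)
  then show ?thesis unfolding Ts_def by simp
qed

theorem lemma4:
  fixes s r0 :: "real ^ 2" and ts :: "(real ^ 2) list"
    and Ps N0 \<gamma> \<alpha> :: real
  assumes ts_ne: "ts \<noteq> []"
    and distinct: "distinct (s # ts)"
    and ordered: "sorted (map (dist s) ts)"
    and Ps: "Ps > 0" and N0: "N0 > 0" and \<gamma>: "\<gamma> > 0" and \<alpha>: "\<alpha> \<ge> 2"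
    and r0_seg: "r0 \<in> closed_segment s (last ts)"
    and r0_dist: "dist s r0 = dist s (last ts) / (1 + \<gamma> powr (1 / \<alpha>))"
    and r0_notin: "r0 \<notin> set ts"
    and cover: "set ts \<subseteq> cball s (dist s r0) \<union> cball r0 (dist r0 (last ts))"
  shows "\<forall>r. r \<notin> insert s (set ts) \<longrightarrow>
           opt_rate s (set ts) Ps (\<gamma> * Ps) N0 \<alpha> r \<le> opt_rate s (set ts) Ps (\<gamma> * Ps) N0 \<alpha> r0"
proof -
  define T t g where "T = set ts" and "t = last ts" and "g = \<gamma> powr (1 / \<alpha>)"
  define c where "c = Ps / N0 * ((1 + g) / dist s t) powr \<alpha>"
  define P0 where "P0 = two_hop_alloc s r0 T {u \<in> T. dist s u \<le> dist s r0} Ps (\<gamma> * Ps)"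
  have T: "finite T" "t \<in> T" "s \<notin> T" using ts_ne distinct unfolding T_def t_def by auto
  have g: "g > 0" "\<gamma> = g powr \<alpha>" unfolding g_def using \<gamma> \<alpha> by (auto simp: powr_powr)
  note r0_dist' = r0_dist[folded t_def g_def]
  have upper: "rate_sT s r T N0 \<alpha> P \<le> c"
    if "r \<notin> insert s T" "P \<in> power_allocs s r T Ps (\<gamma> * Ps)" for r P
    unfolding c_def using relay_rate_upper_bound[OF T that(1) N0 _ _ g that(2)] Ps \<alpha> by simp
  have "0 < dist s t" using T by (auto simp: dist_pos_lt)
  then have "0 < dist s r0" unfolding r0_dist' using g by simp
  then have r0N: "r0 \<notin> insert s T" using r0_notin unfolding T_def by auto
  have "c \<le> rate_sT s r0 T N0 \<alpha> P0"
    unfolding c_def P0_def using Ps N0 \<alpha>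
    by (intro balanced_relay_achieves[OF T r0N r0_seg[folded t_def] r0_dist' g cover[folded T_def t_def]]) auto
  also have "\<dots> \<le> opt_rate s T Ps (\<gamma> * Ps) N0 \<alpha> r0"
    unfolding P0_def using upper[OF r0N] r0N T(1) Ps \<gamma>
    by (intro opt_rate_ge two_hop_alloc_admissible) auto
  moreover have "opt_rate s T Ps (\<gamma> * Ps) N0 \<alpha> r \<le> c" if "r \<notin> insert s T" for r
    using upper[OF that] Ps \<gamma> by (intro opt_rate_le) auto
  ultimately show ?thesis unfolding T_def by (meson order_trans)
qed

end
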